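(* Let $G$ and $H$ be graphs without isolated vertices. Then the Kronecker double coverings $K_2 \times G$ and $K_2 \times H$ are isomorphic as graphs if and only if the box complexes $B(G)$ and $B(H)$ are isomorphic as posets (ignoring the involutions).
   Context: A graph $G$ is a set $V(G)$ together with a symmetric subset $E(G) \subset V(G)\times V(G)$ (undirected, no multiple edges, loops allowed; graphs may be infinite). For $v \in V(G)$, $N(v)=\{w : (v,w)\in E(G)\}$; $v$ is isolated if $N(v)=\emptyset$. $K_2$ is the graph with $V(K_2)=\{1,2\}$ and $E(K_2)=\{(1,2),(2,1)\}$. The (tensor) product $G\times H$ has vertex set $V(G)\times V(H)$, with $((x,y),(x',y'))$ an edge iff $(x,x')\in E(G)$ and $(y,y')\in E(H)$; $K_2\times G$ is the Kronecker double covering of $G$. The box complex $B(G)$ is the poset of all pairs $(\sigma,\tau)$ of non-empty (possibly infinite) subsets of $V(G)$ with $\sigma\times\tau\subset E(G)$, ordered by $(\sigma,\tau)\le(\sigma',\tau')$ iff $\sigma\subset\sigma'$ and $\tau\subset\tau'$, and equipped with the involution $(\sigma,\tau)\leftrightarrow(\tau,\sigma)$. *)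

theory Defs
  imports Main
begin

text \<open>A graph is a vertex set together with a symmetric edge relation on it
(undirected, loops allowed, possibly infinite).\<close>

type_synonym 'a graph = "'a set \<times> ('a \<times> 'a) set"

definition verts :: "'a graph \<Rightarrow> 'a set" where "verts G = fst G"
definition edges :: "'a graph \<Rightarrow> ('a \<times> 'a) set" where "edges G = snd G"

definition is_graph :: "'a graph \<Rightarrow> bool" where
  "is_graph G \<longleftrightarrow> edges G \<subseteq> verts G \<times> verts G \<and> sym (edges G)"

definition nbhd :: "'a graph \<Rightarrow> 'a \<Rightarrow> 'a set" where
  "nbhd G v = {w. (v, w) \<in> edges G}"

definition no_isolated :: "'a graph \<Rightarrow> bool" where
  "no_isolated G \<longleftrightarrow> (\<forall>v\<in>verts G. nbhd G v \<noteq> {})"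

definition K2 :: "nat graph" where
  "K2 = ({1, 2}, {(1, 2), (2, 1)})"

definition tensor :: "'a graph \<Rightarrow> 'b graph \<Rightarrow> ('a \<times> 'b) graph" where
  "tensor G H = (verts G \<times> verts H,
     {((x, y), (x', y')). (x, x') \<in> edges G \<and> (y, y') \<in> edges H})"

definition graph_iso :: "'a graph \<Rightarrow> 'b graph \<Rightarrow> bool" where
  "graph_iso G H \<longleftrightarrow> (\<exists>f. bij_betw f (verts G) (verts H) \<and>
     (\<forall>x\<in>verts G. \<forall>y\<in>verts G. (x, y) \<in> edges G \<longleftrightarrow> (f x, f y) \<in> edges H))"

definition box :: "'a graph \<Rightarrow> ('a set \<times> 'a set) set" where
  "box G = {(\<sigma>, \<tau>). \<sigma> \<noteq> {} \<and> \<tau> \<noteq> {} \<and> \<sigma> \<subseteq> verts G \<and> \<tau> \<subseteq> verts G \<and> \<sigma> \<times> \<tau> \<subseteq> edges G}"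

definition box_le :: "'a set \<times> 'a set \<Rightarrow> 'a set \<times> 'a set \<Rightarrow> bool" where
  "box_le p q \<longleftrightarrow> fst p \<subseteq> fst q \<and> snd p \<subseteq> snd q"

definition poset_iso :: "'c set \<Rightarrow> ('c \<Rightarrow> 'c \<Rightarrow> bool) \<Rightarrow> 'd set \<Rightarrow> ('d \<Rightarrow> 'd \<Rightarrow> bool) \<Rightarrow> bool" where
  "poset_iso A leA B leB \<longleftrightarrow> (\<exists>f. bij_betw f A B \<and>
     (\<forall>x\<in>A. \<forall>y\<in>A. leA x y \<longleftrightarrow> leB (f x) (f y)))"

end

theory Submission
  imports Defs
begin

text \<open>
  The Kronecker double cover \<open>K\<^sub>2 \<times> G\<close> is bipartite: the layer \<open>1\<close> or \<open>2\<close> of a vertex is a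
  proper 2-colouring. The proof compares both sides of the theorem with the poset of
  \<^emph>\<open>biclique sets\<close> of a graph, the vertex sets \<open>A \<union> B\<close> of complete bipartite subgraphs
  \<open>A \<times> B \<subseteq> E\<close>, ordered by inclusion.

  \<^item> The box complex of \<open>G\<close> is isomorphic to the biclique sets of \<open>K\<^sub>2 \<times> G\<close>, via
    \<open>(\<sigma>, \<tau>) \<mapsto> {1} \<times> \<sigma> \<union> {2} \<times> \<tau>\<close>.
  \<^item> Isomorphic graphs have isomorphic biclique-set posets; this is the forward direction.
  \<^item> In a bicoloured graph (proper 2-colouring, no isolated vertices) the minimal biclique sets
    are the edges \<open>{p, q}\<close>, and two different edges meet iff some biclique set contains exactly
    these two edges. Hence an isomorphism of biclique posets restricts to a bijection of edges
    preserving the intersection pattern.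
  \<^item> A Whitney-type reconstruction: the stars of vertices are recognisable from the intersection
    pattern of the edges, so such a bijection maps stars to stars and induces a graph
    isomorphism; the two ends of a \<open>K\<^sub>2\<close> component are told apart by the colouring.
\<close>

section \<open>Families of sets up to intersection-preserving bijections\<close>

lemma inj_on_image_subset_iff:
  assumes "inj_on f C" "A \<subseteq> C" "B \<subseteq> C"
  shows "f ` A \<subseteq> f ` B \<longleftrightarrow> A \<subseteq> B"
  using assms unfolding inj_on_def by blast

lemma ex_subset_image: "(\<exists>B. B \<subseteq> f ` A \<and> P B) \<longleftrightarrow> (\<exists>B. B \<subseteq> A \<and> P (f ` B))"
  by (auto simp: subset_image_iff)

definition intersection_iso :: "('u set \<Rightarrow> 'w set) \<Rightarrow> 'u set set \<Rightarrow> 'w set set \<Rightarrow> bool" where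
  "intersection_iso \<psi> L L' \<longleftrightarrow>
     bij_betw \<psi> L L' \<and> (\<forall>a\<in>L. \<forall>b\<in>L. a \<inter> b \<noteq> {} \<longleftrightarrow> \<psi> a \<inter> \<psi> b \<noteq> {})"

text \<open>A subfamily of \<open>L\<close> whose members meet pairwise, i.e. a clique of the intersection graph
  of \<open>L\<close> (each member being non-empty).\<close>

definition meeting :: "'v set set \<Rightarrow> 'v set set \<Rightarrow> bool" where
  "meeting L K \<longleftrightarrow> K \<subseteq> L \<and> (\<forall>a\<in>K. \<forall>b\<in>K. a \<inter> b \<noteq> {})"

definition maximal_meeting :: "'v set set \<Rightarrow> 'v set set \<Rightarrow> bool" where
  "maximal_meeting L K \<longleftrightarrow> meeting L K \<and> (\<forall>K'\<subseteq>L. meeting L K' \<and> K \<subseteq> K' \<longrightarrow> K' = K)"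

definition nontrivial :: "'a set \<Rightarrow> bool" where
  "nontrivial K \<longleftrightarrow> (\<exists>a\<in>K. \<exists>b\<in>K. a \<noteq> b)"

definition branching :: "'v set set \<Rightarrow> 'v set \<Rightarrow> bool" where
  "branching L a \<longleftrightarrow> (\<exists>K1\<subseteq>L. \<exists>K2\<subseteq>L. K1 \<noteq> K2 \<and> maximal_meeting L K1 \<and> maximal_meeting L K2 \<and>
     nontrivial K1 \<and> nontrivial K2 \<and> a \<in> K1 \<and> a \<in> K2)"

text \<open>The intersection-theoretic description of a star: either a nontrivial maximal meeting
  subfamily, or a single non-branching member.\<close>

definition star_like :: "'v set set \<Rightarrow> 'v set set \<Rightarrow> bool" where
  "star_like L S \<longleftrightarrow> (maximal_meeting L S \<and> nontrivial S) \<or> (\<exists>a\<in>L. S = {a} \<and> \<not> branching L a)"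

lemma nontrivial_image:
  assumes "inj_on f A" "K \<subseteq> A"
  shows "nontrivial (f ` K) \<longleftrightarrow> nontrivial K"
  using assms unfolding nontrivial_def inj_on_def by (smt (verit) image_iff subsetD)

text \<open>All these notions are defined through the intersection pattern alone, so an
  intersection-preserving bijection transports them.\<close>

context
  fixes \<psi> :: "'u set \<Rightarrow> 'w set" and L :: "'u set set" and L' :: "'w set set"
  assumes iso: "intersection_iso \<psi> L L'"
begin

lemma intersection_iso_image: "L' = \<psi> ` L" and intersection_iso_inj: "inj_on \<psi> L"
  using iso unfolding intersection_iso_def bij_betw_def by auto

lemma meets_image: "a \<in> L \<Longrightarrow> b \<in> L \<Longrightarrow> \<psi> a \<inter> \<psi> b = {} \<longleftrightarrow> a \<inter> b = {}"
  using iso unfolding intersection_iso_def by blast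

lemma meeting_image:
  assumes "K \<subseteq> L"
  shows "meeting L' (\<psi> ` K) \<longleftrightarrow> meeting L K"
  using assms meets_image unfolding meeting_def intersection_iso_image
  by (smt (verit, best) image_iff subset_iff)

lemma maximal_meeting_image:
  assumes "K \<subseteq> L"
  shows "maximal_meeting L' (\<psi> ` K) \<longleftrightarrow> maximal_meeting L K"
  unfolding maximal_meeting_def intersection_iso_image all_subset_image
  using assms meeting_image[unfolded intersection_iso_image]
  by (simp add: inj_on_image_subset_iff[OF intersection_iso_inj] inj_on_image_eq_iff[OF intersection_iso_inj])

lemma branching_image:
  assumes "a \<in> L"
  shows "branching L' (\<psi> a) \<longleftrightarrow> branching L a"
  unfolding branching_def intersection_iso_image ex_subset_image
  using assms maximal_meeting_image[unfolded intersection_iso_image]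
  by (smt (verit, best) inj_on_image_eq_iff inj_on_image_mem_iff intersection_iso_inj nontrivial_image)

lemma star_like_image:
  assumes "S \<subseteq> L"
  shows "star_like L' (\<psi> ` S) \<longleftrightarrow> star_like L S"
proof -
  have single: "\<psi> ` S = {\<psi> a} \<longleftrightarrow> S = {a}" if "a \<in> L" for a
    using inj_on_image_eq_iff[OF intersection_iso_inj assms, of "{a}"] that by simp
  show ?thesis
    unfolding star_like_def intersection_iso_image
    using assms maximal_meeting_image[unfolded intersection_iso_image] branching_image[unfolded intersection_iso_image]
      nontrivial_image[OF intersection_iso_inj] single
    by auto
qed

lemma isolated_image:
  assumes "a \<in> L"
  shows "(\<forall>b\<in>L'. \<psi> a \<inter> b \<noteq> {} \<longrightarrow> b = \<psi> a) \<longleftrightarrow> (\<forall>b\<in>L. a \<inter> b \<noteq> {} \<longrightarrow> b = a)"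
  unfolding intersection_iso_image using assms meets_image intersection_iso_inj
  by (smt (verit, ccfv_threshold) image_iff inj_on_def)

end

section \<open>Properly 2-coloured graphs and their edge sets\<close>

text \<open>A graph without isolated vertices together with a proper colouring by two colours.
  Such a graph is loop-free and triangle-free; Kronecker double covers are the example we need.\<close>

definition bicoloured :: "'v graph \<Rightarrow> ('v \<Rightarrow> bool) \<Rightarrow> bool" where
  "bicoloured X c \<longleftrightarrow> is_graph X \<and> no_isolated X \<and> (\<forall>p q. (p, q) \<in> edges X \<longrightarrow> c p \<noteq> c q)"

definition edge_sets :: "'v graph \<Rightarrow> 'v set set" where
  "edge_sets X = {{p, q} | p q. (p, q) \<in> edges X}"

definition star :: "'v graph \<Rightarrow> 'v \<Rightarrow> 'v set set" where
  "star X x = {a \<in> edge_sets X. x \<in> a}"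

text \<open>A twin of a vertex is a different vertex with the same star; in a bicoloured graph
  this happens exactly for the two end points of a connected component isomorphic to \<open>K\<^sub>2\<close>.\<close>

definition has_twin :: "'v graph \<Rightarrow> 'v \<Rightarrow> bool" where
  "has_twin X x \<longleftrightarrow> (\<exists>x'\<in>verts X. x' \<noteq> x \<and> star X x' = star X x)"

lemma edge_setI: "(p, q) \<in> edges X \<Longrightarrow> {p, q} \<in> edge_sets X"
  unfolding edge_sets_def by blast

lemma edge_set_nonempty: "a \<in> edge_sets X \<Longrightarrow> a \<noteq> {}"
  unfolding edge_sets_def by blast

lemma star_subset: "star X x \<subseteq> edge_sets X"
  unfolding star_def by blast

context
  fixes X :: "'v graph" and c :: "'v \<Rightarrow> bool"
  assumes bic: "bicoloured X c"
begin

lemma bicoloured_edge: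
  assumes "(p, q) \<in> edges X"
  shows "p \<in> verts X" "q \<in> verts X" "(q, p) \<in> edges X" "p \<noteq> q" "c p \<noteq> c q"
  using assms bic unfolding bicoloured_def is_graph_def sym_def by auto

lemma bicoloured_edge_sym: "(p, q) \<in> edges X \<longleftrightarrow> (q, p) \<in> edges X"
  using bicoloured_edge by metis

text \<open>Two colours do not suffice for a triangle.\<close>

lemma bicoloured_no_triangle:
  assumes "(p, q) \<in> edges X" "(q, r) \<in> edges X" "(p, r) \<in> edges X"
  shows False
  using assms bic unfolding bicoloured_def by metis

lemma edge_set_at:
  assumes "a \<in> edge_sets X" "x \<in> a"
  shows "\<exists>y. a = {x, y} \<and> (x, y) \<in> edges X \<and> x \<noteq> y"
proof -
  obtain p q where "a = {p, q}" "(p, q) \<in> edges X"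
    using assms(1) unfolding edge_sets_def by blast
  with bicoloured_edge[of p q] assms(2) show ?thesis
    by (auto simp: insert_commute)
qed

lemma edge_set_eq:
  assumes "a \<in> edge_sets X" "u \<in> a" "v \<in> a" "u \<noteq> v"
  shows "a = {u, v}"
  using edge_set_at[OF assms(1,2)] assms(3,4) by auto

lemma edge_set_edge:
  assumes "{p, q} \<in> edge_sets X"
  shows "(p, q) \<in> edges X"
proof -
  obtain u v where "{p, q} = {u, v}" "(u, v) \<in> edges X"
    using assms unfolding edge_sets_def by blast
  then show ?thesis
    using bicoloured_edge_sym by (auto simp: doubleton_eq_iff)
qed

lemma star_nonempty:
  assumes "x \<in> verts X"
  shows "star X x \<noteq> {}"
proof -
  obtain y where "(x, y) \<in> edges X"
    using assms bic unfolding bicoloured_def no_isolated_def nbhd_def by blast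
  then have "{x, y} \<in> star X x"
    unfolding star_def using edge_setI by simp
  then show ?thesis by blast
qed

lemma edge_iff_stars_meet:
  assumes "x \<in> verts X" "x' \<in> verts X"
  shows "(x, x') \<in> edges X \<longleftrightarrow> x \<noteq> x' \<and> star X x \<inter> star X x' \<noteq> {}"
proof
  assume e: "(x, x') \<in> edges X"
  then have "{x, x'} \<in> star X x \<inter> star X x'"
    using edge_setI[OF e] unfolding star_def by simp
  with bicoloured_edge(4)[OF e] show "x \<noteq> x' \<and> star X x \<inter> star X x' \<noteq> {}"
    by blast
next
  assume "x \<noteq> x' \<and> star X x \<inter> star X x' \<noteq> {}"
  then obtain a where "a \<in> edge_sets X" "x \<in> a" "x' \<in> a" "x \<noteq> x'"
    unfolding star_def by blast
  then show "(x, x') \<in> edges X"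
    using edge_set_eq edge_set_edge by metis
qed

text \<open>Triangle-freeness in terms of edge sets: an edge set meeting two different edges through
  a common vertex \<open>x\<close> must itself pass through \<open>x\<close>.\<close>

lemma edge_set_through_common_vertex:
  assumes a: "a \<in> edge_sets X" and b: "b \<in> edge_sets X" and e: "e \<in> edge_sets X"
    and "a \<noteq> b" "x \<in> a" "x \<in> b" "e \<inter> a \<noteq> {}" "e \<inter> b \<noteq> {}"
  shows "x \<in> e"
proof (rule ccontr)
  assume "x \<notin> e"
  obtain q where q: "a = {x, q}" "(x, q) \<in> edges X"
    using edge_set_at[OF a \<open>x \<in> a\<close>] by blast
  obtain s where s: "b = {x, s}" "(x, s) \<in> edges X"
    using edge_set_at[OF b \<open>x \<in> b\<close>] by blast
  have "q \<in> e" "s \<in> e" "q \<noteq> s"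
    using assms \<open>x \<notin> e\<close> q s by auto
  then have "(q, s) \<in> edges X"
    using edge_set_eq[OF e] edge_set_edge e by metis
  with q s show False
    using bicoloured_no_triangle bicoloured_edge_sym by blast
qed

subsection \<open>Stars are recognisable from the intersection pattern of edges\<close>

lemma star_meeting: "meeting (edge_sets X) (star X x)"
  unfolding meeting_def star_def by blast

text \<open>A nontrivial star is a maximal meeting family of edges, and by triangle-freeness every
  nontrivial maximal meeting family of edges is a star.\<close>

lemma star_maximal_meeting:
  assumes "nontrivial (star X x)"
  shows "maximal_meeting (edge_sets X) (star X x)"
proof -
  obtain a b where ab: "a \<in> star X x" "b \<in> star X x" "a \<noteq> b"
    using assms unfolding nontrivial_def by blast
  have "K \<subseteq> star X x" if "meeting (edge_sets X) K" "star X x \<subseteq> K" for K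
  proof
    fix e assume "e \<in> K"
    with that ab have "e \<in> edge_sets X" "e \<inter> a \<noteq> {}" "e \<inter> b \<noteq> {}"
      unfolding meeting_def by auto
    with ab show "e \<in> star X x"
      using edge_set_through_common_vertex[of a b e x] unfolding star_def by auto
  qed
  then show ?thesis
    unfolding maximal_meeting_def using star_meeting by blast
qed

lemma maximal_meeting_is_star:
  assumes max: "maximal_meeting (edge_sets X) K" and "nontrivial K"
  shows "\<exists>x\<in>verts X. K = star X x"
proof -
  obtain a b where ab: "a \<in> K" "b \<in> K" "a \<noteq> b"
    using \<open>nontrivial K\<close> unfolding nontrivial_def by blast
  have K: "meeting (edge_sets X) K"
    using max unfolding maximal_meeting_def by blast
  then obtain x where x: "x \<in> a" "x \<in> b"
    using ab unfolding meeting_def by blast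
  have "K \<subseteq> star X x"
  proof
    fix e assume "e \<in> K"
    with K ab have "e \<in> edge_sets X" "e \<inter> a \<noteq> {}" "e \<inter> b \<noteq> {}" "a \<in> edge_sets X" "b \<in> edge_sets X"
      unfolding meeting_def by auto
    with ab x show "e \<in> star X x"
      using edge_set_through_common_vertex[of a b e x] unfolding star_def by auto
  qed
  moreover have "\<forall>K'\<subseteq>edge_sets X. meeting (edge_sets X) K' \<and> K \<subseteq> K' \<longrightarrow> K' = K"
    using max unfolding maximal_meeting_def by blast
  ultimately have "K = star X x"
    using star_meeting[of x] star_subset[of X x] by blast
  moreover have "x \<in> verts X"
    using x ab K edge_set_at bicoloured_edge(1) unfolding meeting_def by blast
  ultimately show ?thesis by blast
qed

lemma nontrivial_star_determines_vertex:
  assumes "nontrivial (star X u)" "star X u = star X v"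
  shows "u = v"
proof (rule ccontr)
  assume "u \<noteq> v"
  obtain a b where "a \<in> star X u" "b \<in> star X u" "a \<noteq> b"
    using assms(1) unfolding nontrivial_def by blast
  with assms(2) \<open>u \<noteq> v\<close> show False
    using edge_set_eq[of _ u v] unfolding star_def by auto
qed

lemma star_trivial:
  assumes "x \<in> verts X" "\<not> nontrivial (star X x)"
  shows "\<exists>a. star X x = {a}"
  using star_nonempty[OF assms(1)] assms(2) unfolding nontrivial_def by blast

text \<open>A single
  non-branching edge is the star of one of its end points: otherwise both end points would have
  nontrivial stars, two different maximal meeting families through the edge.\<close>

lemma star_like_is_star:
  assumes "star_like (edge_sets X) S"
  shows "\<exists>x\<in>verts X. S = star X x"
proof -
  from assms consider "maximal_meeting (edge_sets X) S" "nontrivial S"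
    | a where "a \<in> edge_sets X" "S = {a}" "\<not> branching (edge_sets X) a"
    unfolding star_like_def by blast
  then show ?thesis
  proof cases
    case 1
    then show ?thesis using maximal_meeting_is_star by blast
  next
    case (2 a)
    obtain p q where pq: "a = {p, q}" "(p, q) \<in> edges X"
      using 2 unfolding edge_sets_def by blast
    have a: "a \<in> star X p" "a \<in> star X q"
      using 2 pq unfolding star_def by auto
    have "p \<in> verts X" "q \<in> verts X" "p \<noteq> q"
      using bicoloured_edge[OF pq(2)] by auto
    moreover have "\<not> (nontrivial (star X p) \<and> nontrivial (star X q))"
    proof
      assume "nontrivial (star X p) \<and> nontrivial (star X q)"
      then have p: "nontrivial (star X p)" and q: "nontrivial (star X q)" by blast+
      then have "star X p \<noteq> star X q"
        using nontrivial_star_determines_vertex \<open>p \<noteq> q\<close> by blast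
      then have "branching (edge_sets X) a"
        unfolding branching_def using p q a star_maximal_meeting star_subset
        by (intro exI[of _ "star X p"] exI[of _ "star X q"] conjI) simp_all
      with 2 show False by blast
    qed
    ultimately show ?thesis
      using star_trivial a 2 by (metis singletonD)
  qed
qed

lemma star_is_star_like:
  assumes "x \<in> verts X"
  shows "star_like (edge_sets X) (star X x)"
proof (cases "nontrivial (star X x)")
  case True
  then show ?thesis
    using star_maximal_meeting unfolding star_like_def by blast
next
  case False
  then obtain a where a: "star X x = {a}"
    using star_trivial[OF assms] by blast
  then have a_at: "a \<in> edge_sets X" "x \<in> a"
    unfolding star_def by auto
  have "\<not> branching (edge_sets X) a"
  proof
    assume "branching (edge_sets X) a"
    then obtain K1 K2 where K: "K1 \<noteq> K2" "maximal_meeting (edge_sets X) K1"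
      "maximal_meeting (edge_sets X) K2" "nontrivial K1" "nontrivial K2" "a \<in> K1" "a \<in> K2"
      unfolding branching_def by blast
    then obtain u v where uv: "K1 = star X u" "K2 = star X v"
      using maximal_meeting_is_star by metis
    with K have "u \<in> a" "v \<in> a" "u \<noteq> v"
      unfolding star_def by auto
    then have "x = u \<or> x = v"
      using edge_set_eq a_at by blast
    with K uv False show False by auto
  qed
  then show ?thesis
    using a a_at unfolding star_like_def by blast
qed

lemma star_like_iff_star:
  "star_like (edge_sets X) S \<longleftrightarrow> (\<exists>x\<in>verts X. S = star X x)"
  using star_like_is_star star_is_star_like by auto

lemma twins:
  assumes "u \<in> verts X" "u' \<in> verts X" "u \<noteq> u'" "star X u = star X u'"
  shows "star X u = {{u, u'}}" "(u, u') \<in> edges X" "c u \<noteq> c u'"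
proof -
  have "a = {u, u'}" if "a \<in> star X u" for a
    using that assms edge_set_eq unfolding star_def by blast
  then show star: "star X u = {{u, u'}}"
    using star_nonempty[OF assms(1)] by blast
  show "(u, u') \<in> edges X"
    using edge_iff_stars_meet[OF assms(1,2)] assms(3,4) star_nonempty[OF assms(2)] by simp
  then show "c u \<noteq> c u'"
    using bicoloured_edge by blast
qed

lemma twin_unique:
  assumes "u \<in> verts X" "u' \<in> verts X" "u \<noteq> u'" "star X u = star X u'"
    and "w \<in> verts X" "star X w = star X u"
  shows "w \<in> {u, u'}"
  using twins(1)[OF assms(1-4)] star_nonempty[OF assms(5)] assms(6) unfolding star_def by auto

lemma has_twin_iff:
  assumes "x \<in> verts X"
  shows "has_twin X x \<longleftrightarrow> (\<exists>a\<in>edge_sets X. star X x = {a} \<and> (\<forall>b\<in>edge_sets X. a \<inter> b \<noteq> {} \<longrightarrow> b = a))"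
proof
  assume "has_twin X x"
  then obtain x' where x': "x' \<in> verts X" "x' \<noteq> x" "star X x' = star X x"
    unfolding has_twin_def by blast
  have star: "star X x = {{x, x'}}"
    using twins(1)[OF assms x'(1)] x' by auto
  have "b = {x, x'}" if "b \<in> edge_sets X" "{x, x'} \<inter> b \<noteq> {}" for b
  proof -
    have "b \<in> star X x \<or> b \<in> star X x'"
      using that unfolding star_def by auto
    then show ?thesis using star x' by auto
  qed
  moreover have "{x, x'} \<in> edge_sets X"
    using star star_subset[of X x] by blast
  ultimately show "\<exists>a\<in>edge_sets X. star X x = {a} \<and> (\<forall>b\<in>edge_sets X. a \<inter> b \<noteq> {} \<longrightarrow> b = a)"
    using star by blast
next
  assume "\<exists>a\<in>edge_sets X. star X x = {a} \<and> (\<forall>b\<in>edge_sets X. a \<inter> b \<noteq> {} \<longrightarrow> b = a)"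
  then obtain a where a: "star X x = {a}" and iso: "\<forall>b\<in>edge_sets X. a \<inter> b \<noteq> {} \<longrightarrow> b = a"
    by blast
  then have "a \<in> edge_sets X" "x \<in> a"
    unfolding star_def by auto
  then obtain x' where x': "a = {x, x'}" "(x, x') \<in> edges X" "x \<noteq> x'"
    using edge_set_at by blast
  have "b = a" if "b \<in> star X x'" for b
    using that iso x'(1) unfolding star_def by blast
  moreover have "a \<in> star X x'"
    using \<open>a \<in> edge_sets X\<close> x'(1) unfolding star_def by blast
  ultimately have "star X x' = {a}"
    by blast
  then show "has_twin X x"
    unfolding has_twin_def using a x'(3) bicoloured_edge(2)[OF x'(2)] by auto
qed

end

section \<open>Reconstruction from the intersection pattern of edges\<close>

text \<open>An intersection-preserving bijection between the edge sets of two bicoloured graphs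
  induces a graph isomorphism (a form of Whitney's line graph theorem; triangle-freeness rules
  out the exceptional pair \<open>K\<^sub>3\<close>, \<open>K\<^sub>1\<^sub>,\<^sub>3\<close>). Vertices are matched through their stars;
  the only ambiguity, the two end points of a \<open>K\<^sub>2\<close> component, is resolved by the colours.\<close>

context
  fixes X :: "'v graph" and c :: "'v \<Rightarrow> bool" and Y :: "'w graph" and d :: "'w \<Rightarrow> bool"
    and \<psi> :: "'v set \<Rightarrow> 'w set"
  assumes bX: "bicoloured X c" and bY: "bicoloured Y d"
    and iso: "intersection_iso \<psi> (edge_sets X) (edge_sets Y)"
begin

lemma star_image_is_star:
  assumes "x \<in> verts X"
  shows "\<exists>y\<in>verts Y. \<psi> ` star X x = star Y y"
proof -
  have "star_like (edge_sets X) (star X x)"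
    using star_like_iff_star[OF bX] assms by blast
  then have "star_like (edge_sets Y) (\<psi> ` star X x)"
    using star_like_image[OF iso star_subset] by blast
  then show ?thesis
    using star_like_iff_star[OF bY] by blast
qed

lemma star_has_preimage:
  assumes "y \<in> verts Y"
  shows "\<exists>x\<in>verts X. \<psi> ` star X x = star Y y"
proof -
  obtain S where S: "S \<subseteq> edge_sets X" "star Y y = \<psi> ` S"
    using star_subset[of Y y] intersection_iso_image[OF iso] by (auto simp: subset_image_iff)
  have "star_like (edge_sets Y) (star Y y)"
    using star_like_iff_star[OF bY] assms by blast
  then have "star_like (edge_sets X) S"
    using star_like_image[OF iso S(1)] S(2) by simp
  then obtain x where "x \<in> verts X" "S = star X x"
    using star_like_iff_star[OF bX] by blast
  with S(2) show ?thesis by blast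
qed

text \<open>Stars correspond to stars, and by the characterisation of twins through isolated edges,
  vertices with twins correspond to vertices with twins.\<close>

lemma has_twin_image:
  assumes x: "x \<in> verts X" and y: "y \<in> verts Y" and xy: "\<psi> ` star X x = star Y y"
  shows "has_twin X x \<longleftrightarrow> has_twin Y y"
proof -
  have single: "star Y y = {\<psi> a} \<longleftrightarrow> star X x = {a}" if "a \<in> edge_sets X" for a
    using inj_on_image_eq_iff[OF intersection_iso_inj[OF iso] star_subset[of X x], of "{a}"] that xy
    by simp
  have "has_twin Y y \<longleftrightarrow>
      (\<exists>a'\<in>edge_sets Y. star Y y = {a'} \<and> (\<forall>b\<in>edge_sets Y. a' \<inter> b \<noteq> {} \<longrightarrow> b = a'))"
    using has_twin_iff[OF bY y] .
  also have "\<dots> \<longleftrightarrow>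
      (\<exists>a\<in>edge_sets X. star Y y = {\<psi> a} \<and> (\<forall>b\<in>edge_sets Y. \<psi> a \<inter> b \<noteq> {} \<longrightarrow> b = \<psi> a))"
    unfolding intersection_iso_image[OF iso] by auto
  also have "\<dots> \<longleftrightarrow> (\<exists>a\<in>edge_sets X. star X x = {a} \<and> (\<forall>b\<in>edge_sets X. a \<inter> b \<noteq> {} \<longrightarrow> b = a))"
    using single isolated_image[OF iso] by simp
  also have "\<dots> \<longleftrightarrow> has_twin X x"
    using has_twin_iff[OF bX x] ..
  finally show ?thesis ..
qed

text \<open>For a vertex with a twin, both candidate images are available, so one of matching
  colour can be chosen.\<close>

lemma colour_matched_star:
  assumes x: "x \<in> verts X" and "has_twin X x"
  shows "\<exists>y\<in>verts Y. \<psi> ` star X x = star Y y \<and> d y = c x"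
proof -
  obtain y where y: "y \<in> verts Y" "\<psi> ` star X x = star Y y"
    using star_image_is_star x by blast
  then obtain y' where y': "y' \<in> verts Y" "y' \<noteq> y" "star Y y' = star Y y"
    using has_twin_image[OF x y] \<open>has_twin X x\<close> unfolding has_twin_def by blast
  have "d y \<noteq> d y'"
    using twins(3)[OF bY y(1) y'(1)] y' by auto
  then have "d y = c x \<or> d y' = c x" by blast
  then show ?thesis
    using y y' by auto
qed

context
  fixes f :: "'v \<Rightarrow> 'w"
  assumes f: "\<And>x. x \<in> verts X \<Longrightarrow>
    f x \<in> verts Y \<and> \<psi> ` star X x = star Y (f x) \<and> (has_twin X x \<longrightarrow> d (f x) = c x)"
begin

lemma star_map_inj: "inj_on f (verts X)"
proof (rule inj_onI)
  fix x x' assume x: "x \<in> verts X" "x' \<in> verts X" and eq: "f x = f x'"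
  show "x = x'"
  proof (rule ccontr)
    assume "x \<noteq> x'"
    have "\<psi> ` star X x = \<psi> ` star X x'"
      using f x eq by metis
    then have "star X x = star X x'"
      using inj_on_image_eq_iff[OF intersection_iso_inj[OF iso] star_subset[of X x] star_subset[of X x']]
      by simp
    then have "has_twin X x" "has_twin X x'" "c x \<noteq> c x'"
      using twins(3)[OF bX x \<open>x \<noteq> x'\<close>] x \<open>x \<noteq> x'\<close> unfolding has_twin_def by auto
    then show False
      using f x eq by metis
  qed
qed

lemma star_map_surj: "f ` verts X = verts Y"
proof
  show "f ` verts X \<subseteq> verts Y"
    using f by blast
  show "verts Y \<subseteq> f ` verts X"
  proof
    fix y assume y: "y \<in> verts Y"
    obtain x where x: "x \<in> verts X" "\<psi> ` star X x = star Y y"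
      using star_has_preimage y by blast
    have fx: "f x \<in> verts Y" "star Y (f x) = star Y y"
      using f x by auto
    show "y \<in> f ` verts X"
    proof (cases "f x = y")
      case True
      then show ?thesis using x by blast
    next
      case False
      then have "has_twin Y y"
        using fx unfolding has_twin_def by auto
      then have "has_twin X x"
        using has_twin_image x y by blast
      then obtain x' where x': "x' \<in> verts X" "x' \<noteq> x" "star X x' = star X x"
        unfolding has_twin_def by blast
      have "f x' \<noteq> f x"
        using star_map_inj x' x unfolding inj_on_def by blast
      moreover have "f x' \<in> {y, f x}"
        using twin_unique[OF bY y fx(1)] False fx(2) f[OF x'(1)] x' x by auto
      ultimately show ?thesis
        using x' by blast
    qed
  qed
qed

lemma star_map_edges:
  assumes "x \<in> verts X" "x' \<in> verts X"
  shows "(x, x') \<in> edges X \<longleftrightarrow> (f x, f x') \<in> edges Y"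
proof -
  have "star Y (f x) \<inter> star Y (f x') = \<psi> ` (star X x \<inter> star X x')"
    using f assms inj_on_image_Int[OF intersection_iso_inj[OF iso] star_subset star_subset] by metis
  moreover have "f x = f x' \<longleftrightarrow> x = x'"
    using star_map_inj assms unfolding inj_on_def by blast
  ultimately show ?thesis
    using edge_iff_stars_meet[OF bX assms] edge_iff_stars_meet[OF bY] f assms by auto
qed

lemma star_map_graph_iso: "graph_iso X Y"
  unfolding graph_iso_def bij_betw_def using star_map_inj star_map_surj star_map_edges by blast

end

theorem intersection_iso_graph_iso: "graph_iso X Y"
proof -
  define P where
    "P x y \<longleftrightarrow> y \<in> verts Y \<and> \<psi> ` star X x = star Y y \<and> (has_twin X x \<longrightarrow> d y = c x)" for x y
  have "\<exists>y. P x y" if "x \<in> verts X" for x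
    using star_image_is_star[OF that] colour_matched_star[OF that] unfolding P_def by blast
  then have "P x (SOME y. P x y)" if "x \<in> verts X" for x
    using that someI_ex by metis
  then show ?thesis
    using star_map_graph_iso[of "\<lambda>x. SOME y. P x y"] unfolding P_def by blast
qed

end

section \<open>Biclique sets\<close>

text \<open>For a Kronecker
  double cover this poset is the box complex; for a bicoloured graph it determines the edge sets
  (its minimal elements) and their intersection pattern.\<close>

definition biclique_sets :: "'v graph \<Rightarrow> 'v set set" where
  "biclique_sets X = {A \<union> B | A B. A \<noteq> {} \<and> B \<noteq> {} \<and> A \<times> B \<subseteq> edges X}"

definition spans_exactly :: "'v set set \<Rightarrow> 'v set \<Rightarrow> 'v set \<Rightarrow> 'v set \<Rightarrow> bool" where
  "spans_exactly M u a b \<longleftrightarrow> a \<subseteq> u \<and> b \<subseteq> u \<and> (\<forall>e\<in>M. e \<subseteq> u \<longrightarrow> e = a \<or> e = b)"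

lemma biclique_setI: "A \<noteq> {} \<Longrightarrow> B \<noteq> {} \<Longrightarrow> A \<times> B \<subseteq> edges X \<Longrightarrow> A \<union> B \<in> biclique_sets X"
  unfolding biclique_sets_def by blast

lemma biclique_set_subset_verts: "is_graph X \<Longrightarrow> S \<in> biclique_sets X \<Longrightarrow> S \<subseteq> verts X"
  unfolding biclique_sets_def is_graph_def by blast

lemma edge_set_biclique:
  assumes "a \<in> edge_sets X"
  shows "a \<in> biclique_sets X"
proof -
  obtain p q where "a = {p} \<union> {q}" "(p, q) \<in> edges X"
    using assms unfolding edge_sets_def by auto
  then show ?thesis
    using biclique_setI[of "{p}" "{q}" X] by auto
qed

lemma biclique_neighbour:
  assumes "sym (edges X)" "S \<in> biclique_sets X" "p \<in> S"
  shows "\<exists>q\<in>S. (p, q) \<in> edges X"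
proof -
  obtain A B where AB: "A \<noteq> {}" "B \<noteq> {}" "S = A \<union> B" "A \<times> B \<subseteq> edges X"
    using assms(2) unfolding biclique_sets_def by blast
  obtain a b where "a \<in> A" "b \<in> B"
    using AB by blast
  then show ?thesis
    using AB assms(1,3) by (auto dest: symD)
qed

context
  fixes X :: "'v graph" and c :: "'v \<Rightarrow> bool"
  assumes bic: "bicoloured X c"
begin

lemma edge_set_iff_minimal:
  "a \<in> edge_sets X \<longleftrightarrow> a \<in> biclique_sets X \<and> (\<forall>b\<in>biclique_sets X. b \<subseteq> a \<longrightarrow> b = a)"
proof
  have sym: "sym (edges X)"
    using bic unfolding bicoloured_def is_graph_def by blast
  have small_edge: "\<exists>x y. {x, y} \<in> edge_sets X \<and> {x, y} \<subseteq> a \<and> x \<noteq> y"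
    if a: "a \<in> biclique_sets X" for a
  proof -
    obtain x where "x \<in> a"
      using a unfolding biclique_sets_def by blast
    then obtain y where "y \<in> a" "(x, y) \<in> edges X"
      using biclique_neighbour[OF sym a] by blast
    then show ?thesis
      using \<open>x \<in> a\<close> edge_setI[of x y X] bicoloured_edge(4)[OF bic] by blast
  qed
  show "a \<in> biclique_sets X \<and> (\<forall>b\<in>biclique_sets X. b \<subseteq> a \<longrightarrow> b = a)" if a: "a \<in> edge_sets X"
  proof -
    have "b = a" if "b \<in> biclique_sets X" "b \<subseteq> a" for b
      using small_edge[OF that(1)] that(2) edge_set_eq[OF bic a] by blast
    then show ?thesis
      using edge_set_biclique[OF a] by blast
  qed
  show "a \<in> edge_sets X" if "a \<in> biclique_sets X \<and> (\<forall>b\<in>biclique_sets X. b \<subseteq> a \<longrightarrow> b = a)"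
    using that small_edge edge_set_biclique by metis
qed

text \<open>By triangle-freeness an edge inside a biclique \<open>A \<union> B\<close> joins \<open>A\<close> to \<open>B\<close>.\<close>

lemma edge_set_in_biclique:
  assumes AB: "A \<times> B \<subseteq> edges X" "A \<noteq> {}" "B \<noteq> {}"
    and a: "a \<in> edge_sets X" "a \<subseteq> A \<union> B"
  shows "\<exists>x y. a = {x, y} \<and> x \<in> A \<and> y \<in> B"
proof -
  obtain p q where pq: "a = {p, q}" "(p, q) \<in> edges X"
    using a unfolding edge_sets_def by blast
  obtain z w where "z \<in> A" "w \<in> B"
    using AB by blast
  have "\<not> (p \<in> A \<and> q \<in> A)"
    using pq \<open>w \<in> B\<close> AB bicoloured_no_triangle[OF bic, of p q w] bicoloured_edge_sym[OF bic] by blast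
  moreover have "\<not> (p \<in> B \<and> q \<in> B)"
    using pq \<open>z \<in> A\<close> AB bicoloured_no_triangle[OF bic, of z p q] by blast
  ultimately show ?thesis
    using pq a by (auto simp: insert_commute)
qed

lemma meeting_edges_span_biclique:
  assumes a: "a \<in> edge_sets X" and b: "b \<in> edge_sets X" and "a \<inter> b \<noteq> {}"
  shows "\<exists>u\<in>biclique_sets X. spans_exactly (edge_sets X) u a b"
proof -
  obtain x where x: "x \<in> a" "x \<in> b"
    using assms by blast
  obtain q where q: "a = {x, q}" "(x, q) \<in> edges X"
    using edge_set_at[OF bic a x(1)] by blast
  obtain s where s: "b = {x, s}" "(x, s) \<in> edges X"
    using edge_set_at[OF bic b x(2)] by blast
  have u: "{x} \<union> {q, s} \<in> biclique_sets X"
    using q s by (intro biclique_setI) auto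
  have "e = a \<or> e = b" if e: "e \<in> edge_sets X" "e \<subseteq> {x} \<union> {q, s}" for e
  proof (cases "x \<in> e")
    case True
    then obtain w where "e = {x, w}" "x \<noteq> w"
      using edge_set_at[OF bic e(1)] by blast
    with e q s show ?thesis by auto
  next
    case False
    obtain p where "p \<in> e"
      using edge_set_nonempty[OF e(1)] by blast
    then obtain p' where p: "e = {p, p'}" "(p, p') \<in> edges X" "p \<noteq> p'"
      using edge_set_at[OF bic e(1)] by blast
    with e(2) False have "{p, p'} = {q, s}"
      by auto
    with p(2) have "(q, s) \<in> edges X"
      using bicoloured_edge_sym[OF bic] by (auto simp: doubleton_eq_iff)
    then show ?thesis
      using bicoloured_no_triangle[OF bic q(2) _ s(2)] by blast
  qed
  then have "spans_exactly (edge_sets X) ({x} \<union> {q, s}) a b"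
    unfolding spans_exactly_def using q s by blast
  with u show ?thesis by blast
qed

lemma biclique_spanning_edges_meet:
  assumes a: "a \<in> edge_sets X" and b: "b \<in> edge_sets X"
    and u: "u \<in> biclique_sets X" "spans_exactly (edge_sets X) u a b"
  shows "a \<inter> b \<noteq> {}"
proof
  assume disjoint: "a \<inter> b = {}"
  obtain A B where AB: "A \<noteq> {}" "B \<noteq> {}" "u = A \<union> B" "A \<times> B \<subseteq> edges X"
    using u(1) unfolding biclique_sets_def by blast
  obtain a1 a2 where a12: "a = {a1, a2}" "a1 \<in> A" "a2 \<in> B"
    using edge_set_in_biclique[OF AB(4,1,2) a] u(2) AB(3) unfolding spans_exactly_def by blast
  obtain b1 b2 where b12: "b = {b1, b2}" "b1 \<in> A" "b2 \<in> B"
    using edge_set_in_biclique[OF AB(4,1,2) b] u(2) AB(3) unfolding spans_exactly_def by blast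
  have "{a1, b2} \<in> edge_sets X" "{a1, b2} \<subseteq> u"
    using edge_setI[of a1 b2 X] a12 b12 AB by auto
  then have "{a1, b2} = a \<or> {a1, b2} = b"
    using u(2) unfolding spans_exactly_def by blast
  with disjoint a12 b12 show False by auto
qed

lemma edges_meet_iff_spanned:
  assumes "a \<in> edge_sets X" "b \<in> edge_sets X"
  shows "a \<inter> b \<noteq> {} \<longleftrightarrow> (\<exists>u\<in>biclique_sets X. spans_exactly (edge_sets X) u a b)"
  using meeting_edges_span_biclique[OF assms] biclique_spanning_edges_meet[OF assms] by blast

end

context
  fixes \<phi> :: "'u set \<Rightarrow> 'w set" and P :: "'u set set" and Q :: "'w set set"
  assumes bij: "bij_betw \<phi> P Q"
    and mono: "\<forall>S\<in>P. \<forall>T\<in>P. S \<subseteq> T \<longleftrightarrow> \<phi> S \<subseteq> \<phi> T"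
begin

lemma order_iso_image: "Q = \<phi> ` P" and order_iso_inj: "inj_on \<phi> P"
  using bij unfolding bij_betw_def by auto

lemma order_iso_subset_iff: "S \<in> P \<Longrightarrow> T \<in> P \<Longrightarrow> \<phi> S \<subseteq> \<phi> T \<longleftrightarrow> S \<subseteq> T"
  using mono by blast

lemma minimal_image:
  assumes "a \<in> P"
  shows "(\<forall>b\<in>Q. b \<subseteq> \<phi> a \<longrightarrow> b = \<phi> a) \<longleftrightarrow> (\<forall>b\<in>P. b \<subseteq> a \<longrightarrow> b = a)"
proof -
  have "(\<forall>b\<in>Q. b \<subseteq> \<phi> a \<longrightarrow> b = \<phi> a) \<longleftrightarrow> (\<forall>b\<in>P. \<phi> b \<subseteq> \<phi> a \<longrightarrow> \<phi> b = \<phi> a)"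
    unfolding order_iso_image by blast
  also have "\<dots> \<longleftrightarrow> (\<forall>b\<in>P. b \<subseteq> a \<longrightarrow> b = a)"
    using assms order_iso_subset_iff inj_on_eq_iff[OF order_iso_inj] by simp
  finally show ?thesis .
qed

lemma spans_exactly_image:
  assumes "M \<subseteq> P" "u \<in> P" "a \<in> M" "b \<in> M"
  shows "spans_exactly (\<phi> ` M) (\<phi> u) (\<phi> a) (\<phi> b) \<longleftrightarrow> spans_exactly M u a b"
proof -
  have "\<phi> e = \<phi> a \<or> \<phi> e = \<phi> b \<longleftrightarrow> e = a \<or> e = b" if "e \<in> M" for e
    using that assms order_iso_inj unfolding inj_on_def by blast
  then show ?thesis
    using assms order_iso_subset_iff unfolding spans_exactly_def by (simp add: subsetD)
qed

end

lemma biclique_iso_intersection_iso: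
  assumes bX: "bicoloured X c" and bY: "bicoloured Y d"
    and "poset_iso (biclique_sets X) (\<subseteq>) (biclique_sets Y) (\<subseteq>)"
  shows "\<exists>\<phi>. intersection_iso \<phi> (edge_sets X) (edge_sets Y)"
proof -
  obtain \<phi> where bij: "bij_betw \<phi> (biclique_sets X) (biclique_sets Y)"
    and mono: "\<forall>S\<in>biclique_sets X. \<forall>T\<in>biclique_sets X. S \<subseteq> T \<longleftrightarrow> \<phi> S \<subseteq> \<phi> T"
    using assms(3) unfolding poset_iso_def by blast
  note image = order_iso_image[OF bij mono] and inj = order_iso_inj[OF bij mono]
  have EX: "edge_sets X \<subseteq> biclique_sets X"
    using edge_set_biclique by blast
  have "edge_sets Y = {b \<in> \<phi> ` biclique_sets X. \<forall>b'\<in>biclique_sets Y. b' \<subseteq> b \<longrightarrow> b' = b}"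
    using edge_set_iff_minimal[OF bY] image by auto
  also have "\<dots> = \<phi> ` {a \<in> biclique_sets X. \<forall>b\<in>biclique_sets X. b \<subseteq> a \<longrightarrow> b = a}"
    using minimal_image[OF bij mono] by auto
  also have "\<dots> = \<phi> ` edge_sets X"
    using edge_set_iff_minimal[OF bX] by blast
  finally have edges_image: "edge_sets Y = \<phi> ` edge_sets X" .
  have "a \<inter> b \<noteq> {} \<longleftrightarrow> \<phi> a \<inter> \<phi> b \<noteq> {}" if a: "a \<in> edge_sets X" and b: "b \<in> edge_sets X" for a b
  proof -
    have "\<phi> a \<inter> \<phi> b \<noteq> {} \<longleftrightarrow> (\<exists>u\<in>biclique_sets Y. spans_exactly (edge_sets Y) u (\<phi> a) (\<phi> b))"
      using edges_meet_iff_spanned[OF bY] a b edges_image by blast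
    also have "\<dots> \<longleftrightarrow> (\<exists>u\<in>biclique_sets X. spans_exactly (edge_sets X) u a b)"
      unfolding image edges_image using spans_exactly_image[OF bij mono EX] a b by auto
    also have "\<dots> \<longleftrightarrow> a \<inter> b \<noteq> {}"
      using edges_meet_iff_spanned[OF bX a b] ..
    finally show ?thesis by simp
  qed
  moreover have "bij_betw \<phi> (edge_sets X) (edge_sets Y)"
    using inj_on_subset[OF inj EX] edges_image unfolding bij_betw_def by blast
  ultimately show ?thesis
    unfolding intersection_iso_def by blast
qed

lemma biclique_sets_image:
  assumes gX: "is_graph X" and gY: "is_graph Y" and g: "bij_betw g (verts X) (verts Y)"
    and e: "\<And>x y. x \<in> verts X \<Longrightarrow> y \<in> verts X \<Longrightarrow> (x, y) \<in> edges X \<longleftrightarrow> (g x, g y) \<in> edges Y"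
  shows "image g ` biclique_sets X = biclique_sets Y"
proof
  show "image g ` biclique_sets X \<subseteq> biclique_sets Y"
  proof
    fix S' assume "S' \<in> image g ` biclique_sets X"
    then obtain A B where AB: "A \<noteq> {}" "B \<noteq> {}" "A \<times> B \<subseteq> edges X" "S' = g ` A \<union> g ` B"
      unfolding biclique_sets_def by auto
    then have "A \<subseteq> verts X" "B \<subseteq> verts X"
      using gX unfolding is_graph_def by blast+
    then have "g ` A \<times> g ` B \<subseteq> edges Y"
      using AB(3) e by blast
    then show "S' \<in> biclique_sets Y"
      using biclique_setI[of "g ` A" "g ` B" Y] AB by auto
  qed
  show "biclique_sets Y \<subseteq> image g ` biclique_sets X"
  proof
    fix S' assume "S' \<in> biclique_sets Y"
    then obtain A' B' where AB': "A' \<noteq> {}" "B' \<noteq> {}" "A' \<times> B' \<subseteq> edges Y" "S' = A' \<union> B'"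
      unfolding biclique_sets_def by blast
    then have "A' \<subseteq> g ` verts X" "B' \<subseteq> g ` verts X"
      using gY g unfolding is_graph_def bij_betw_def by blast+
    then obtain A B where AB: "A \<subseteq> verts X" "A' = g ` A" "B \<subseteq> verts X" "B' = g ` B"
      by (auto simp: subset_image_iff)
    then have "A \<times> B \<subseteq> edges X"
      using AB'(3) e by blast
    then have "A \<union> B \<in> biclique_sets X"
      using biclique_setI[of A B X] AB AB'(1,2) by auto
    then show "S' \<in> image g ` biclique_sets X"
      using AB AB'(4) by blast
  qed
qed

lemma graph_iso_biclique_iso:
  assumes gX: "is_graph X" and gY: "is_graph Y" and "graph_iso X Y"
  shows "poset_iso (biclique_sets X) (\<subseteq>) (biclique_sets Y) (\<subseteq>)"
proof -
  obtain g where g: "bij_betw g (verts X) (verts Y)"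
    and e: "\<forall>x\<in>verts X. \<forall>y\<in>verts X. (x, y) \<in> edges X \<longleftrightarrow> (g x, g y) \<in> edges Y"
    using \<open>graph_iso X Y\<close> unfolding graph_iso_def by blast
  have inj: "inj_on g (verts X)"
    using g unfolding bij_betw_def by blast
  have sub: "S \<subseteq> verts X" if "S \<in> biclique_sets X" for S
    using biclique_set_subset_verts[OF gX that] .
  have "inj_on (image g) (biclique_sets X)"
    using inj_on_subset[OF inj_on_image_Pow[OF inj]] sub by blast
  then have "bij_betw (image g) (biclique_sets X) (biclique_sets Y)"
    using biclique_sets_image[OF gX gY g] e unfolding bij_betw_def by blast
  moreover have "S \<subseteq> T \<longleftrightarrow> g ` S \<subseteq> g ` T" if "S \<in> biclique_sets X" "T \<in> biclique_sets X" for S T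
    using inj_on_image_subset_iff[OF inj sub sub] that by blast
  ultimately show ?thesis
    unfolding poset_iso_def by blast
qed

section \<open>The Kronecker double cover\<close>

lemma tensor_K2_verts: "verts (tensor K2 G) = {1, 2} \<times> verts G"
  by (simp add: tensor_def verts_def K2_def)

lemma tensor_K2_edges:
  "((i, v), (j, w)) \<in> edges (tensor K2 G) \<longleftrightarrow>
     ((i = 1 \<and> j = 2) \<or> (i = 2 \<and> j = 1)) \<and> (v, w) \<in> edges G"
  by (auto simp: tensor_def edges_def K2_def)

lemma is_graph_tensor_K2:
  assumes "is_graph G"
  shows "is_graph (tensor K2 G)"
  using assms unfolding is_graph_def sym_def
  by (force simp: tensor_K2_verts tensor_K2_edges)

lemma bicoloured_tensor_K2:
  assumes g: "is_graph G" and n: "no_isolated G"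
  shows "bicoloured (tensor K2 G) (\<lambda>p. fst p = 1)"
proof -
  have "nbhd (tensor K2 G) (i, v) \<noteq> {}" if "(i, v) \<in> verts (tensor K2 G)" for i v
  proof -
    have "v \<in> verts G" "i = 1 \<or> i = 2"
      using that by (auto simp: tensor_K2_verts)
    moreover obtain w where "(v, w) \<in> edges G"
      using n \<open>v \<in> verts G\<close> unfolding no_isolated_def nbhd_def by blast
    ultimately have "((i, v), (3 - i, w)) \<in> edges (tensor K2 G)"
      by (auto simp: tensor_K2_edges)
    then show ?thesis
      unfolding nbhd_def by blast
  qed
  then have "no_isolated (tensor K2 G)"
    unfolding no_isolated_def by auto
  moreover have "fst p = 1 \<longleftrightarrow> fst q \<noteq> 1" if "(p, q) \<in> edges (tensor K2 G)" for p q :: "nat \<times> _"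
    using that by (cases p, cases q) (auto simp: tensor_K2_edges)
  ultimately show ?thesis
    unfolding bicoloured_def using is_graph_tensor_K2[OF g] by blast
qed

text \<open>A box \<open>(\<sigma>, \<tau>)\<close> of \<open>G\<close> corresponds to the biclique \<open>{1} \<times> \<sigma> \<union> {2} \<times> \<tau>\<close>
  of the double cover.\<close>

definition cover_set :: "'a set \<times> 'a set \<Rightarrow> (nat \<times> 'a) set" where
  "cover_set p = {1} \<times> fst p \<union> {2} \<times> snd p"

lemma cover_set_subset_iff: "cover_set p \<subseteq> cover_set q \<longleftrightarrow> box_le p q"
  unfolding cover_set_def box_le_def by auto

lemma inj_cover_set: "inj cover_set"
proof (rule injI)
  fix p q :: "'a set \<times> 'a set"
  assume "cover_set p = cover_set q"
  then have "box_le p q" "box_le q p"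
    using cover_set_subset_iff by (metis order_refl)+
  then show "p = q"
    unfolding box_le_def by (auto simp: prod_eq_iff)
qed

lemma cover_set_biclique:
  assumes "p \<in> box G"
  shows "cover_set p \<in> biclique_sets (tensor K2 G)"
proof -
  obtain \<sigma> \<tau> where p: "p = (\<sigma>, \<tau>)" "\<sigma> \<noteq> {}" "\<tau> \<noteq> {}" "\<sigma> \<times> \<tau> \<subseteq> edges G"
    using assms unfolding box_def by blast
  then have "({1::nat} \<times> \<sigma>) \<times> ({2} \<times> \<tau>) \<subseteq> edges (tensor K2 G)"
    by (auto simp: tensor_K2_edges)
  then have "{1} \<times> \<sigma> \<union> {2} \<times> \<tau> \<in> biclique_sets (tensor K2 G)"
    using p(2,3) by (intro biclique_setI) auto
  then show ?thesis
    using p(1) unfolding cover_set_def by simp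
qed

lemma biclique_sides_layers:
  assumes AB: "A \<times> B \<subseteq> edges (tensor K2 G)" and a0: "a0 \<in> A" and b0: "b0 \<in> B"
  shows "\<forall>a\<in>A. fst a = fst a0" "\<forall>b\<in>B. fst b = fst b0" "{fst a0, fst b0} = {1, 2}"
proof -
  have layers: "fst a \<noteq> fst b \<and> fst a \<in> {1, 2} \<and> fst b \<in> {1, 2}" if "a \<in> A" "b \<in> B" for a b
  proof -
    have "(a, b) \<in> edges (tensor K2 G)"
      using that AB by blast
    then show ?thesis
      by (cases a, cases b) (auto simp: tensor_K2_edges)
  qed
  have "fst a = fst a0" if "a \<in> A" for a
    using layers[OF that b0] layers[OF a0 b0] by auto
  then show "\<forall>a\<in>A. fst a = fst a0" by blast
  have "fst b = fst b0" if "b \<in> B" for b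
    using layers[OF a0 that] layers[OF a0 b0] by auto
  then show "\<forall>b\<in>B. fst b = fst b0" by blast
  show "{fst a0, fst b0} = {1, 2}"
    using layers[OF a0 b0] by auto
qed

lemma biclique_is_cover_set:
  assumes g: "is_graph G" and S: "S \<in> biclique_sets (tensor K2 G)"
  shows "\<exists>p\<in>box G. S = cover_set p"
proof -
  obtain A B where AB: "A \<noteq> {}" "B \<noteq> {}" "S = A \<union> B" "A \<times> B \<subseteq> edges (tensor K2 G)"
    using S unfolding biclique_sets_def by blast
  obtain a0 b0 where ab0: "a0 \<in> A" "b0 \<in> B"
    using AB(1,2) by blast
  note sides = biclique_sides_layers[OF AB(4) ab0]
  define \<sigma> where "\<sigma> = {v. (1, v) \<in> S}"
  define \<tau> where "\<tau> = {v. (2, v) \<in> S}"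
  have Sv: "S \<subseteq> {1, 2} \<times> verts G"
    using biclique_set_subset_verts[OF is_graph_tensor_K2[OF g] S] by (simp add: tensor_K2_verts)
  have S_eq: "S = cover_set (\<sigma>, \<tau>)"
    using Sv unfolding cover_set_def \<sigma>_def \<tau>_def by auto
  have "\<sigma> \<times> \<tau> \<subseteq> edges G"
  proof clarify
    fix v w assume "v \<in> \<sigma>" "w \<in> \<tau>"
    then have vw: "(1, v) \<in> A \<union> B" "(2, w) \<in> A \<union> B"
      unfolding \<sigma>_def \<tau>_def AB(3) by auto
    show "(v, w) \<in> edges G"
    proof (cases "fst a0 = 1")
      case True
      then have "fst b0 = 2"
        using sides(3) by (auto simp: doubleton_eq_iff)
      then have "(1, v) \<in> A" "(2, w) \<in> B"
        using vw sides(1,2) True by force+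
      then show ?thesis
        using AB(4) by (auto simp: tensor_K2_edges)
    next
      case False
      then have "fst a0 = 2" "fst b0 = 1"
        using sides(3) by (auto simp: doubleton_eq_iff)
      then have "(2, w) \<in> A" "(1, v) \<in> B"
        using vw sides(1,2) by force+
      then have "(w, v) \<in> edges G"
        using AB(4) by (auto simp: tensor_K2_edges)
      then show ?thesis
        using g unfolding is_graph_def by (auto dest: symD)
    qed
  qed
  moreover have "\<sigma> \<noteq> {}" "\<tau> \<noteq> {}"
    using ab0 sides(3) unfolding \<sigma>_def \<tau>_def AB(3)
    by (cases a0, cases b0, force simp: doubleton_eq_iff)+
  moreover have "\<sigma> \<subseteq> verts G" "\<tau> \<subseteq> verts G"
    using Sv unfolding \<sigma>_def \<tau>_def by auto
  ultimately have "(\<sigma>, \<tau>) \<in> box G"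
    unfolding box_def by blast
  with S_eq show ?thesis by blast
qed

lemma box_biclique_iso:
  assumes "is_graph G"
  shows "poset_iso (box G) box_le (biclique_sets (tensor K2 G)) (\<subseteq>)"
proof -
  have "cover_set ` box G = biclique_sets (tensor K2 G)"
    using cover_set_biclique biclique_is_cover_set[OF assms] by blast
  then have "bij_betw cover_set (box G) (biclique_sets (tensor K2 G))"
    using inj_on_subset[OF inj_cover_set] unfolding bij_betw_def by blast
  then show ?thesis
    unfolding poset_iso_def using cover_set_subset_iff by blast
qed

lemma poset_iso_sym:
  assumes "poset_iso A le B le'"
  shows "poset_iso B le' A le"
proof -
  obtain f where f: "bij_betw f A B" "\<forall>x\<in>A. \<forall>y\<in>A. le x y \<longleftrightarrow> le' (f x) (f y)"
    using assms unfolding poset_iso_def by blast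
  have g: "bij_betw (inv_into A f) B A"
    using bij_betw_inv_into[OF f(1)] .
  have "le' x y \<longleftrightarrow> le (inv_into A f x) (inv_into A f y)" if "x \<in> B" "y \<in> B" for x y
    using f that bij_betw_inv_into_right[OF f(1)] bij_betwE[OF g] by metis
  with g show ?thesis
    unfolding poset_iso_def by blast
qed

lemma poset_iso_trans:
  assumes "poset_iso A le B le'" "poset_iso B le' C le''"
  shows "poset_iso A le C le''"
proof -
  obtain f where f: "bij_betw f A B" "\<forall>x\<in>A. \<forall>y\<in>A. le x y \<longleftrightarrow> le' (f x) (f y)"
    using assms(1) unfolding poset_iso_def by blast
  obtain g where g: "bij_betw g B C" "\<forall>x\<in>B. \<forall>y\<in>B. le' x y \<longleftrightarrow> le'' (g x) (g y)"
    using assms(2) unfolding poset_iso_def by blast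
  have "le x y \<longleftrightarrow> le'' (g (f x)) (g (f y))" if "x \<in> A" "y \<in> A" for x y
    using f g that bij_betwE by metis
  then show ?thesis
    unfolding poset_iso_def using bij_betw_trans[OF f(1) g(1)] by auto
qed

lemma poset_iso_cong:
  assumes "poset_iso A le A' leA'" "poset_iso B le2 B' le2'"
  shows "poset_iso A le B le2 \<longleftrightarrow> poset_iso A' leA' B' le2'"
  using assms poset_iso_sym poset_iso_trans by metis

text \<open>Both conditions are equivalent to an isomorphism of the biclique posets of the double covers.\<close>

theorem theorem1p1:
  fixes G :: "'a graph" and H :: "'b graph"
  assumes "is_graph G" and "is_graph H"
    and "no_isolated G" and "no_isolated H"
  shows "graph_iso (tensor K2 G) (tensor K2 H) \<longleftrightarrow>
         poset_iso (box G) box_le (box H) box_le"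
proof -
  let ?X = "tensor K2 G" and ?Y = "tensor K2 H"
  note bX = bicoloured_tensor_K2[OF assms(1,3)] and bY = bicoloured_tensor_K2[OF assms(2,4)]
  have "poset_iso (box G) box_le (box H) box_le \<longleftrightarrow>
      poset_iso (biclique_sets ?X) (\<subseteq>) (biclique_sets ?Y) (\<subseteq>)"
    using poset_iso_cong[OF box_biclique_iso box_biclique_iso] assms(1,2) by blast
  also have "\<dots> \<longleftrightarrow> graph_iso ?X ?Y"
  proof
    assume "poset_iso (biclique_sets ?X) (\<subseteq>) (biclique_sets ?Y) (\<subseteq>)"
    then obtain \<phi> where "intersection_iso \<phi> (edge_sets ?X) (edge_sets ?Y)"
      using biclique_iso_intersection_iso[OF bX bY] by blast
    then show "graph_iso ?X ?Y"
      by (rule intersection_iso_graph_iso[OF bX bY])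
  next
    assume "graph_iso ?X ?Y"
    then show "poset_iso (biclique_sets ?X) (\<subseteq>) (biclique_sets ?Y) (\<subseteq>)"
      by (rule graph_iso_biclique_iso[OF is_graph_tensor_K2[OF assms(1)] is_graph_tensor_K2[OF assms(2)]])
  qed
  finally show ?thesis ..
qed

end
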